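(* Every vertex cover TAR graph is unique: for all graphs $G$ and $G'$, if $\mathfrak{C}(G)\cong\mathfrak{C}(G')$ then $G\cong G'$.
   Context: All graphs are finite, simple, undirected, with nonempty vertex set (isolated vertices allowed). A vertex cover of $G$ is a set $S\subseteq V(G)$ containing at least one endpoint of every edge. The vertex cover TAR graph $\mathfrak{C}(G)$ has as vertices the vertex covers of $G$, with $S_1S_2$ an edge iff $|S_1\ominus S_2|=1$ (symmetric difference). *)

theory Defs
  imports Main
begin

definition simple_graph :: "'a set \<Rightarrow> 'a set set \<Rightarrow> bool" where
  "simple_graph V E \<longleftrightarrow> finite V \<and> V \<noteq> {} \<and> (\<forall>e\<in>E. e \<subseteq> V \<and> card e = 2)"

definition graph_iso :: "'a set \<Rightarrow> 'a set set \<Rightarrow> 'b set \<Rightarrow> 'b set set \<Rightarrow> bool" where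
  "graph_iso V E V' E' \<longleftrightarrow>
     (\<exists>f. bij_betw f V V' \<and> (\<forall>u\<in>V. \<forall>v\<in>V. {u, v} \<in> E \<longleftrightarrow> {f u, f v} \<in> E'))"

definition vertex_covers :: "'a set \<Rightarrow> 'a set set \<Rightarrow> 'a set set" where
  "vertex_covers V E = {S. S \<subseteq> V \<and> (\<forall>e\<in>E. S \<inter> e \<noteq> {})}"

definition vc_tar_edges :: "'a set \<Rightarrow> 'a set set \<Rightarrow> 'a set set set" where
  "vc_tar_edges V E = {{S1, S2} | S1 S2. S1 \<in> vertex_covers V E \<and> S2 \<in> vertex_covers V E
        \<and> card ((S1 - S2) \<union> (S2 - S1)) = 1}"

end

theory Submission
  imports Defs
begin

text \<open>Label each edge \<open>S T\<close> of the TAR graph by the vertex \<open>flip_elem S T\<close> it toggles.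
  Opposite sides of a 4-cycle of the TAR graph carry the same label, and every edge labelled
  \<open>x\<close> is joined to the edge from \<open>V - {x}\<close> to \<open>V\<close> by a chain of such squares. Since an
  isomorphism \<open>\<phi>\<close> of TAR graphs maps squares to squares, it sends all edges labelled \<open>x\<close>
  to edges with one common label \<open>f x\<close>, and the map obtained in the same way from
  \<open>\<phi>\<^sup>-\<^sup>1\<close> inverts \<open>f\<close>. If \<open>u v\<close> is not an edge then \<open>V - {u, v}\<close> is a cover, and the images
  of the covers \<open>V - {u, v}\<close>, \<open>V - {v}\<close>, \<open>V - {u}\<close>, \<open>V\<close> realise all four membership
  patterns of \<open>f u\<close> and \<open>f v\<close>; one of them is a cover avoiding both, so \<open>f u f v\<close> is
  not an edge either. Applying this to \<open>\<phi>\<^sup>-\<^sup>1\<close> gives the converse.\<close>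

definition tar_adj :: "'a set \<Rightarrow> 'a set set \<Rightarrow> 'a set \<Rightarrow> 'a set \<Rightarrow> bool" where
  "tar_adj V E S T \<longleftrightarrow>
     S \<in> vertex_covers V E \<and> T \<in> vertex_covers V E \<and> card (sym_diff S T) = 1"

definition flip_elem :: "'a set \<Rightarrow> 'a set \<Rightarrow> 'a" where
  "flip_elem S T = the_elem (sym_diff S T)"

lemma vc_tar_edges_iff_tar_adj: "{S, T} \<in> vc_tar_edges V E \<longleftrightarrow> tar_adj V E S T"
  unfolding vc_tar_edges_def tar_adj_def by (auto simp: doubleton_eq_iff Un_commute)

lemma tar_adj_sym: "tar_adj V E S T \<Longrightarrow> tar_adj V E T S"
  unfolding tar_adj_def by (simp add: Un_commute)

lemma flip_elem_sym: "flip_elem S T = flip_elem T S"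
  unfolding flip_elem_def by (simp add: Un_commute)

lemma sym_diff_eq_flip_elem: "tar_adj V E S T \<Longrightarrow> sym_diff S T = {flip_elem S T}"
proof -
  assume "tar_adj V E S T"
  then obtain z where "sym_diff S T = {z}"
    unfolding tar_adj_def using card_1_singleton_iff[of "sym_diff S T"] by auto
  then show ?thesis unfolding flip_elem_def by simp
qed

lemma sym_diff_eq_singleton_insert:
  assumes "sym_diff S T = {z}" "z \<in> S"
  shows "z \<notin> T" "S = insert z T"
  using assms by (auto simp: set_eq_iff)

lemma tar_adj_cases:
  assumes "tar_adj V E S T"
  obtains "flip_elem S T \<notin> T" "S = insert (flip_elem S T) T"
        | "flip_elem S T \<notin> S" "T = insert (flip_elem S T) S"
proof (cases "flip_elem S T \<in> S")
  case True
  then show thesis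
    using that(1) sym_diff_eq_singleton_insert[OF sym_diff_eq_flip_elem[OF assms]] by blast
next
  case False
  have "sym_diff T S = {flip_elem S T}"
    using sym_diff_eq_flip_elem[OF assms] by (simp add: Un_commute)
  moreover from this False have "flip_elem S T \<in> T" by blast
  ultimately show thesis using that(2) sym_diff_eq_singleton_insert by metis
qed

lemma tar_adj_insert:
  assumes "S \<in> vertex_covers V E" "insert x S \<in> vertex_covers V E" "x \<notin> S"
  shows "tar_adj V E S (insert x S)" "flip_elem S (insert x S) = x"
proof -
  have "sym_diff S (insert x S) = {x}" using assms(3) by auto
  then show "tar_adj V E S (insert x S)" "flip_elem S (insert x S) = x"
    using assms(1,2) unfolding tar_adj_def flip_elem_def by simp_all
qed

lemma vertex_covers_subset: "S \<in> vertex_covers V E \<Longrightarrow> S \<subseteq> V"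
  unfolding vertex_covers_def by auto

lemma vertex_covers_mono:
  "S \<in> vertex_covers V E \<Longrightarrow> S \<subseteq> T \<Longrightarrow> T \<subseteq> V \<Longrightarrow> T \<in> vertex_covers V E"
  unfolding vertex_covers_def by blast

lemma flip_elem_in_carrier: "tar_adj V E S T \<Longrightarrow> flip_elem S T \<in> V"
  using sym_diff_eq_flip_elem[of V E S T] vertex_covers_subset[of S V E] vertex_covers_subset[of T V E]
  unfolding tar_adj_def by blast

lemma non_edge_if_outside_cover:
  assumes "T \<in> vertex_covers V E" "x \<notin> T" "y \<notin> T"
  shows "{x, y} \<notin> E"
proof
  assume "{x, y} \<in> E"
  with assms(1) have "T \<inter> {x, y} \<noteq> {}" unfolding vertex_covers_def by blast
  with assms(2,3) show False by blast
qed

lemma diff_non_edge_in_vertex_covers: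
  assumes "simple_graph V E" "{u, v} \<notin> E"
  shows "V - {u, v} \<in> vertex_covers V E"
  unfolding vertex_covers_def
proof (intro CollectI conjI ballI)
  fix e assume e: "e \<in> E"
  then have "e \<subseteq> V" "card e = 2" using assms(1) unfolding simple_graph_def by auto
  show "(V - {u, v}) \<inter> e \<noteq> {}"
  proof
    assume "(V - {u, v}) \<inter> e = {}"
    with \<open>e \<subseteq> V\<close> have sub: "e \<subseteq> {u, v}" by blast
    have "card {u, v} \<le> card e" using \<open>card e = 2\<close> by (simp add: card_insert_le_m1)
    with sub have "e = {u, v}" by (simp add: card_seteq)
    with e assms(2) show False by simp
  qed
qed blast

lemma diff_singleton_in_vertex_covers: "simple_graph V E \<Longrightarrow> V - {x} \<in> vertex_covers V E"
proof -
  assume "simple_graph V E"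
  moreover from this have "{x, x} \<notin> E" unfolding simple_graph_def by auto
  ultimately show ?thesis using diff_non_edge_in_vertex_covers[of V E x x] by simp
qed

lemma carrier_in_vertex_covers: "simple_graph V E \<Longrightarrow> V \<in> vertex_covers V E"
  by (rule vertex_covers_mono[OF diff_singleton_in_vertex_covers]) auto

lemma tar_adj_diff_singleton:
  assumes "simple_graph V E" "x \<in> V"
  shows "tar_adj V E (V - {x}) V" "flip_elem (V - {x}) V = x"
proof -
  have "insert x (V - {x}) = V" using assms(2) by blast
  then show "tar_adj V E (V - {x}) V" "flip_elem (V - {x}) V = x"
    using tar_adj_insert[of "V - {x}" V E x]
      diff_singleton_in_vertex_covers[OF assms(1)] carrier_in_vertex_covers[OF assms(1)] by simp_all
qed

lemma sym_diff_square_avoids: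
  assumes "sym_diff A B = {p}" "sym_diff A C = {q}" "sym_diff B D = {q}"
  shows "\<exists>T\<in>{A, B, C, D}. p \<notin> T \<and> q \<notin> T"
  using assms by (simp add: set_eq_iff) blast

lemma sym_diff_four_cycle_opposite_eq:
  assumes "sym_diff a b = {x}" "sym_diff b d = {y}" "sym_diff d c = {z}" "sym_diff c a = {w}"
    and "a \<noteq> d" "b \<noteq> c"
  shows "x = z"
  using assms by (simp add: set_eq_iff) metis

text \<open>The oriented TAR edges \<open>(a, b)\<close> and \<open>(c, d)\<close> are opposite sides of the
  4-cycle \<open>a b d c\<close>.\<close>
definition square_opposite ::
    "'a set \<Rightarrow> 'a set set \<Rightarrow> (('a set \<times> 'a set) \<times> ('a set \<times> 'a set)) set" where
  "square_opposite V E = {((a, b), (c, d)). tar_adj V E a b \<and> tar_adj V E b d \<and>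
     tar_adj V E d c \<and> tar_adj V E c a \<and> a \<noteq> d \<and> b \<noteq> c}"

lemma square_opposite_flip_elem_eq:
  assumes "((a, b), (c, d)) \<in> square_opposite V E"
  shows "flip_elem a b = flip_elem c d"
proof -
  have "tar_adj V E a b" "tar_adj V E b d" "tar_adj V E d c" "tar_adj V E c a" "a \<noteq> d" "b \<noteq> c"
    using assms unfolding square_opposite_def by simp_all
  then have "flip_elem a b = flip_elem d c"
    by (intro sym_diff_four_cycle_opposite_eq[OF sym_diff_eq_flip_elem sym_diff_eq_flip_elem
          sym_diff_eq_flip_elem sym_diff_eq_flip_elem])
  then show ?thesis by (simp add: flip_elem_sym)
qed

lemma rtrancl_square_opposite_flip_elem_eq:
  "(p, q) \<in> (square_opposite V E)\<^sup>* \<Longrightarrow> case_prod flip_elem p = case_prod flip_elem q"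
proof (induction rule: rtrancl_induct)
  case (step q r)
  then show ?case by (cases q, cases r) (auto dest: square_opposite_flip_elem_eq)
qed simp

lemma square_opposite_insert:
  assumes "S \<in> vertex_covers V E" "x \<in> V" "y \<in> V" "x \<notin> S" "y \<notin> S" "x \<noteq> y"
  shows "((S, insert x S), (insert y S, insert x (insert y S))) \<in> square_opposite V E"
proof -
  have "S \<subseteq> V" using assms(1) by (rule vertex_covers_subset)
  then have covers: "insert x S \<in> vertex_covers V E" "insert y S \<in> vertex_covers V E"
      "insert x (insert y S) \<in> vertex_covers V E"
    using assms(1-3) by (auto intro: vertex_covers_mono)
  have xy: "insert y (insert x S) = insert x (insert y S)" by (rule insert_commute)
  have "tar_adj V E S (insert x S)" "tar_adj V E S (insert y S)"
      "tar_adj V E (insert x S) (insert x (insert y S))"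
      "tar_adj V E (insert y S) (insert x (insert y S))"
    using tar_adj_insert(1)[of S V E x] tar_adj_insert(1)[of S V E y]
      tar_adj_insert(1)[of "insert x S" V E y] tar_adj_insert(1)[of "insert y S" V E x]
      covers assms(1,4-6) unfolding xy by simp_all
  then show ?thesis
    unfolding square_opposite_def using assms(4-6) by (auto intro: tar_adj_sym)
qed

text \<open>Add the vertices missing from \<open>insert x S\<close> one at a time; each step crosses a square.\<close>
lemma rtrancl_square_opposite_carrier:
  assumes "simple_graph V E"
  shows "S \<in> vertex_covers V E \<Longrightarrow> x \<in> V \<Longrightarrow> x \<notin> S \<Longrightarrow>
    ((S, insert x S), (V - {x}, V)) \<in> (square_opposite V E)\<^sup>*"
proof (induction "card (V - insert x S)" arbitrary: S rule: less_induct)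
  case less
  have "S \<subseteq> V" using less.prems(1) by (rule vertex_covers_subset)
  show ?case
  proof (cases "V - insert x S = {}")
    case True
    with \<open>S \<subseteq> V\<close> less.prems(2,3) have "S = V - {x}" "insert x S = V" by auto
    then show ?thesis by simp
  next
    case False
    then obtain y where y: "y \<in> V" "y \<noteq> x" "y \<notin> S" by blast
    have "insert y S \<in> vertex_covers V E"
      using less.prems(1) \<open>S \<subseteq> V\<close> y(1) by (auto intro: vertex_covers_mono)
    moreover have "card (V - insert x (insert y S)) < card (V - insert x S)"
      using y assms unfolding simple_graph_def by (intro psubset_card_mono) auto
    ultimately have "((insert y S, insert x (insert y S)), (V - {x}, V)) \<in> (square_opposite V E)\<^sup>*"
      using less.hyps less.prems(2,3) y(2) by simp
    with square_opposite_insert[of S V E x y] less.prems y show ?thesis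
      by (blast intro: converse_rtrancl_into_rtrancl)
  qed
qed

definition induced_vertex_map :: "'a set \<Rightarrow> ('a set \<Rightarrow> 'b set) \<Rightarrow> 'a \<Rightarrow> 'b" where
  "induced_vertex_map V \<phi> x = flip_elem (\<phi> (V - {x})) (\<phi> V)"

locale vc_tar_iso =
  fixes V :: "'a set" and E :: "'a set set" and V' :: "'b set" and E' :: "'b set set"
    and \<phi> :: "'a set \<Rightarrow> 'b set"
  assumes graph: "simple_graph V E"
    and bij: "bij_betw \<phi> (vertex_covers V E) (vertex_covers V' E')"
    and tar_adj_image_iff: "\<And>S T. S \<in> vertex_covers V E \<Longrightarrow> T \<in> vertex_covers V E \<Longrightarrow>
      tar_adj V' E' (\<phi> S) (\<phi> T) \<longleftrightarrow> tar_adj V E S T"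
begin

lemma tar_adj_image: "tar_adj V E S T \<Longrightarrow> tar_adj V' E' (\<phi> S) (\<phi> T)"
  using tar_adj_image_iff unfolding tar_adj_def by blast

lemma square_opposite_image:
  assumes "((a, b), (c, d)) \<in> square_opposite V E"
  shows "((\<phi> a, \<phi> b), (\<phi> c, \<phi> d)) \<in> square_opposite V' E'"
proof -
  have adj: "tar_adj V E a b" "tar_adj V E b d" "tar_adj V E d c" "tar_adj V E c a"
    and "a \<noteq> d" "b \<noteq> c"
    using assms unfolding square_opposite_def by simp_all
  moreover have "inj_on \<phi> (vertex_covers V E)" using bij by (rule bij_betw_imp_inj_on)
  ultimately have "\<phi> a \<noteq> \<phi> d" "\<phi> b \<noteq> \<phi> c"
    using adj unfolding tar_adj_def by (auto dest: inj_onD)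
  then show ?thesis unfolding square_opposite_def using adj by (simp add: tar_adj_image)
qed

lemma rtrancl_square_opposite_image:
  "(p, q) \<in> (square_opposite V E)\<^sup>* \<Longrightarrow>
    (map_prod \<phi> \<phi> p, map_prod \<phi> \<phi> q) \<in> (square_opposite V' E')\<^sup>*"
proof (induction rule: rtrancl_induct)
  case (step q r)
  then have "(map_prod \<phi> \<phi> q, map_prod \<phi> \<phi> r) \<in> square_opposite V' E'"
    by (cases q, cases r) (simp add: square_opposite_image)
  with step.IH show ?case by (rule rtrancl_into_rtrancl)
qed simp

lemma flip_elem_image_insert:
  assumes "S \<in> vertex_covers V E" "x \<in> V" "x \<notin> S"
  shows "flip_elem (\<phi> S) (\<phi> (insert x S)) = induced_vertex_map V \<phi> x"
  using rtrancl_square_opposite_flip_elem_eq[OF rtrancl_square_opposite_image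
      [OF rtrancl_square_opposite_carrier[OF graph assms]]]
  unfolding induced_vertex_map_def by simp

lemma sym_diff_image_insert:
  assumes "S \<in> vertex_covers V E" "insert x S \<in> vertex_covers V E" "x \<notin> S"
  shows "sym_diff (\<phi> S) (\<phi> (insert x S)) = {induced_vertex_map V \<phi> x}"
proof -
  have "x \<in> V" using vertex_covers_subset[OF assms(2)] by blast
  have "sym_diff (\<phi> S) (\<phi> (insert x S)) = {flip_elem (\<phi> S) (\<phi> (insert x S))}"
    by (rule sym_diff_eq_flip_elem[OF tar_adj_image[OF tar_adj_insert(1)[OF assms]]])
  also have "flip_elem (\<phi> S) (\<phi> (insert x S)) = induced_vertex_map V \<phi> x"
    by (rule flip_elem_image_insert[OF assms(1) \<open>x \<in> V\<close> assms(3)])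
  finally show ?thesis .
qed

lemma flip_elem_image:
  assumes "tar_adj V E S T"
  shows "flip_elem (\<phi> S) (\<phi> T) = induced_vertex_map V \<phi> (flip_elem S T)"
proof -
  have z: "flip_elem S T \<in> V" using assms by (rule flip_elem_in_carrier)
  have covers: "S \<in> vertex_covers V E" "T \<in> vertex_covers V E"
    using assms unfolding tar_adj_def by simp_all
  show ?thesis
  proof (cases rule: tar_adj_cases[OF assms])
    case 1
    from flip_elem_image_insert[OF covers(2) z 1(1)]
    have "flip_elem (\<phi> T) (\<phi> S) = induced_vertex_map V \<phi> (flip_elem S T)"
      by (simp only: 1(2)[symmetric])
    then show ?thesis by (simp only: flip_elem_sym)
  next
    case 2
    from flip_elem_image_insert[OF covers(1) z 2(1)] show ?thesis
      by (simp only: 2(2)[symmetric])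
  qed
qed

lemma induced_vertex_map_in: "x \<in> V \<Longrightarrow> induced_vertex_map V \<phi> x \<in> V'"
  unfolding induced_vertex_map_def
  by (rule flip_elem_in_carrier[OF tar_adj_image[OF tar_adj_diff_singleton(1)[OF graph]]])

lemma non_edge_image:
  assumes "u \<in> V" "v \<in> V" "{u, v} \<notin> E"
  shows "{induced_vertex_map V \<phi> u, induced_vertex_map V \<phi> v} \<notin> E'"
proof -
  let ?f = "induced_vertex_map V \<phi>"
  have covers: "\<phi> S \<in> vertex_covers V' E'" if "S \<in> vertex_covers V E" for S
    using bij that by (rule bij_betw_apply)
  have "\<exists>T\<in>vertex_covers V' E'. ?f u \<notin> T \<and> ?f v \<notin> T"
  proof (cases "u = v")
    case True
    have "tar_adj V' E' (\<phi> (V - {u})) (\<phi> V)"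
      by (intro tar_adj_image tar_adj_diff_singleton[OF graph assms(1)])
    then have "sym_diff (\<phi> (V - {u})) (\<phi> V) = {?f u}"
      unfolding induced_vertex_map_def by (rule sym_diff_eq_flip_elem)
    with True covers diff_singleton_in_vertex_covers[OF graph] carrier_in_vertex_covers[OF graph]
    show ?thesis by blast
  next
    case False
    define S where "S = V - {u, v}"
    have S: "S \<in> vertex_covers V E"
      unfolding S_def by (rule diff_non_edge_in_vertex_covers[OF graph assms(3)])
    have S_u: "insert u S = V - {v}" and S_v: "insert v S = V - {u}" and "u \<notin> S" "v \<notin> S"
      using assms(1,2) False unfolding S_def by auto
    have covers_V: "V - {u} \<in> vertex_covers V E" "V - {v} \<in> vertex_covers V E"
        "V \<in> vertex_covers V E"
      using diff_singleton_in_vertex_covers[OF graph] carrier_in_vertex_covers[OF graph] by simp_all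
    have "v \<notin> V - {v}" "insert v (V - {v}) = V" using assms(2) by auto
    then have "sym_diff (\<phi> S) (\<phi> (V - {v})) = {?f u}" "sym_diff (\<phi> S) (\<phi> (V - {u})) = {?f v}"
        "sym_diff (\<phi> (V - {v})) (\<phi> V) = {?f v}"
      using sym_diff_image_insert[of S u] sym_diff_image_insert[of S v]
        sym_diff_image_insert[of "V - {v}" v] S S_u S_v \<open>u \<notin> S\<close> \<open>v \<notin> S\<close> covers_V
      by simp_all
    from sym_diff_square_avoids[OF this] show ?thesis
      using covers S covers_V by blast
  qed
  then obtain T where "T \<in> vertex_covers V' E'" "?f u \<notin> T" "?f v \<notin> T" by blast
  then show ?thesis by (rule non_edge_if_outside_cover)
qed

lemma induced_vertex_map_inverse:
  assumes "vc_tar_iso V' E' V E \<psi>" "\<And>S. S \<in> vertex_covers V E \<Longrightarrow> \<psi> (\<phi> S) = S" "x \<in> V"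
  shows "induced_vertex_map V' \<psi> (induced_vertex_map V \<phi> x) = x"
proof -
  interpret inverse: vc_tar_iso V' E' V E \<psi> by fact
  have "tar_adj V' E' (\<phi> (V - {x})) (\<phi> V)"
    by (intro tar_adj_image tar_adj_diff_singleton[OF graph assms(3)])
  from inverse.flip_elem_image[OF this] show ?thesis
    using assms(2) diff_singleton_in_vertex_covers[OF graph] carrier_in_vertex_covers[OF graph]
      tar_adj_diff_singleton(2)[OF graph assms(3)]
    unfolding induced_vertex_map_def by simp
qed

end

lemma vc_tar_iso_inv_into:
  assumes "vc_tar_iso V E V' E' \<phi>" "simple_graph V' E'"
  shows "vc_tar_iso V' E' V E (inv_into (vertex_covers V E) \<phi>)"
proof -
  interpret vc_tar_iso V E V' E' \<phi> by fact
  let ?\<psi> = "inv_into (vertex_covers V E) \<phi>"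
  have \<psi>: "bij_betw ?\<psi> (vertex_covers V' E') (vertex_covers V E)" using bij by (rule bij_betw_inv_into)
  show ?thesis
  proof
    fix S T assume S: "S \<in> vertex_covers V' E'" and T: "T \<in> vertex_covers V' E'"
    then have "tar_adj V' E' (\<phi> (?\<psi> S)) (\<phi> (?\<psi> T)) \<longleftrightarrow> tar_adj V E (?\<psi> S) (?\<psi> T)"
      using \<psi> by (intro tar_adj_image_iff) (simp_all add: bij_betw_apply)
    then show "tar_adj V E (?\<psi> S) (?\<psi> T) \<longleftrightarrow> tar_adj V' E' S T"
      using bij_betw_inv_into_right[OF bij S] bij_betw_inv_into_right[OF bij T] by simp
  qed (fact assms(2) \<psi>)+
qed

theorem proposition6p6:
  fixes V :: "'a set" and E :: "'a set set" and V' :: "'b set" and E' :: "'b set set"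
  assumes "simple_graph V E" and "simple_graph V' E'"
    and "graph_iso (vertex_covers V E) (vc_tar_edges V E) (vertex_covers V' E') (vc_tar_edges V' E')"
  shows "graph_iso V E V' E'"
proof -
  obtain \<phi> where bij: "bij_betw \<phi> (vertex_covers V E) (vertex_covers V' E')"
    and edges: "\<forall>S\<in>vertex_covers V E. \<forall>T\<in>vertex_covers V E.
      {S, T} \<in> vc_tar_edges V E \<longleftrightarrow> {\<phi> S, \<phi> T} \<in> vc_tar_edges V' E'"
    using assms(3) unfolding graph_iso_def by blast
  interpret vc_tar_iso V E V' E' \<phi>
    using assms(1) bij edges by unfold_locales (simp_all add: vc_tar_edges_iff_tar_adj)
  define \<psi> where "\<psi> = inv_into (vertex_covers V E) \<phi>"
  interpret inverse: vc_tar_iso V' E' V E \<psi>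
    unfolding \<psi>_def using vc_tar_iso_axioms assms(2) by (rule vc_tar_iso_inv_into)
  let ?f = "induced_vertex_map V \<phi>" and ?g = "induced_vertex_map V' \<psi>"
  have gf: "?g (?f x) = x" if "x \<in> V" for x
    using induced_vertex_map_inverse[OF inverse.vc_tar_iso_axioms _ that] bij
    unfolding \<psi>_def by (simp add: bij_betw_imp_inj_on)
  have fg: "?f (?g y) = y" if "y \<in> V'" for y
    using inverse.induced_vertex_map_inverse[OF vc_tar_iso_axioms _ that] bij
    unfolding \<psi>_def by (simp add: bij_betw_inv_into_right)
  have "bij_betw ?f V V'"
    using gf fg induced_vertex_map_in inverse.induced_vertex_map_in
    by (intro bij_betw_byWitness[where f' = ?g]) (simp_all add: image_subset_iff)
  moreover have "{u, v} \<in> E \<longleftrightarrow> {?f u, ?f v} \<in> E'" if u: "u \<in> V" and v: "v \<in> V" for u v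
  proof
    assume "{u, v} \<in> E"
    then show "{?f u, ?f v} \<in> E'"
      using inverse.non_edge_image[OF induced_vertex_map_in[OF u] induced_vertex_map_in[OF v]]
      by (auto simp: gf u v)
  qed (use non_edge_image[OF u v] in blast)
  ultimately show ?thesis unfolding graph_iso_def by blast
qed

end
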